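(* Let $\alpha>1$, $\mathcal{D}_\alpha\in\{\mathcal{F}_\alpha,\mathcal{P}_\alpha\}$, $\mathcal{B}\subseteq[d]$, $i\in\mathcal{B}$, $\lambda\in[0,\infty)^d$, an integer $\tilde m>1$ and $j\in\mathcal{B}\setminus\{i\}$. Let $\lambda'\in[0,\infty)^d$ satisfy $\lambda'_j\ge\lambda_j$ and $\lambda'_k=\lambda_k$ for all $k\ne j$. Then $$\frac{J_i(\lambda;\mathcal{D}_\alpha,\tilde m,\mathcal{B})}{\phi_i(\lambda;\mathcal{D}_\alpha,\tilde m,\mathcal{B})}\le\frac{J_i(\lambda';\mathcal{D}_\alpha,\tilde m-1,\mathcal{B}\setminus\{j\})}{\phi_i(\lambda';\mathcal{D}_\alpha,\tilde m-1,\mathcal{B}\setminus\{j\})}\vee\frac{J_i(\lambda';\mathcal{D}_\alpha,\tilde m,\mathcal{B})}{\phi_i(\lambda';\mathcal{D}_\alpha,\tilde m,\mathcal{B})}.$$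
   Context: $u\vee v=\max(u,v)$. Fréchet $\mathcal{F}_\alpha$: CDF $F(x)=e^{-1/x^\alpha}$, density $f(x)=\alpha x^{-(\alpha+1)}e^{-1/x^\alpha}$, $x\ge0$, left endpoint $\nu=0$; Pareto $\mathcal{P}_\alpha$: $F(x)=1-x^{-\alpha}$, $f(x)=\alpha x^{-(\alpha+1)}$, $x\ge1$, $\nu=1$. For $\mathcal{B}\subseteq[d]$, $i\in\mathcal{B}$, $u\in\mathbb{R}^d$, $\mathrm{rank}(i,u;\mathcal{B})$ is the rank of $u_i$ among $\{u_k:k\in\mathcal{B}\}$ in descending order. For $\mathcal{D}\in\{\mathcal{F}_\alpha,\mathcal{P}_\alpha\}$ with CDF $F$, density $f$, left endpoint $\nu$, $\lambda\in[0,\infty)^d$, integer $\theta\ge1$: $$\phi_{i,\theta}(\lambda;\mathcal{D},\mathcal{B})=\int_{\nu-\lambda_i}^\infty\sum_{S\subseteq\mathcal{B}\setminus\{i\},|S|=\theta-1}\prod_{k\in S}(1-F(z+\lambda_k))\prod_{k\in\mathcal{B}\setminus(S\cup\{i\})}F(z+\lambda_k)\,f(z+\lambda_i)\,dz$$ (equal to $\mathbb{P}[\mathrm{rank}(i,r-\lambda;\mathcal{B})=\theta]$ for $r$ with i.i.d. coordinates from $\mathcal{D}$; empty sum $=0$), and $J_{i,\theta}(\lambda;\mathcal{D},\mathcal{B})$ is the same integral with the extra factor $\frac1{z+\lambda_i}$ in the integrand. $\phi_i(\lambda;\mathcal{D},\tilde m,\mathcal{B})=\sum_{\theta=1}^{\tilde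 m}\phi_{i,\theta}(\lambda;\mathcal{D},\mathcal{B})$ and $J_i(\lambda;\mathcal{D},\tilde m,\mathcal{B})=\sum_{\theta=1}^{\tilde m}J_{i,\theta}(\lambda;\mathcal{D},\mathcal{B})$. *)

theory Defs
  imports "HOL-Analysis.Analysis"
begin

datatype distr = Frechet real | Pareto real

fun cdf :: "distr \<Rightarrow> real \<Rightarrow> real" where
  "cdf (Frechet a) x = (if x > 0 then exp (- (1 / (x powr a))) else 0)"
| "cdf (Pareto a) x = (if x \<ge> 1 then 1 - x powr (- a) else 0)"

fun pdf :: "distr \<Rightarrow> real \<Rightarrow> real" where
  "pdf (Frechet a) x = (if x > 0 then a * x powr (- (a + 1)) * exp (- (1 / (x powr a))) else 0)"
| "pdf (Pareto a) x = (if x \<ge> 1 then a * x powr (- (a + 1)) else 0)"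

fun lep :: "distr \<Rightarrow> real" where
  "lep (Frechet a) = 0"
| "lep (Pareto a) = 1"

definition rank_integrand :: "distr \<Rightarrow> nat set \<Rightarrow> (nat \<Rightarrow> real) \<Rightarrow> nat \<Rightarrow> nat \<Rightarrow> real \<Rightarrow> real" where
  "rank_integrand D B lam i \<theta> z =
     (\<Sum>S\<in>{S. S \<subseteq> B - {i} \<and> card S = \<theta> - 1}.
        (\<Prod>k\<in>S. 1 - cdf D (z + lam k)) * (\<Prod>k\<in>B - (S \<union> {i}). cdf D (z + lam k)))
     * pdf D (z + lam i)"

definition phi_theta :: "nat \<Rightarrow> nat \<Rightarrow> (nat \<Rightarrow> real) \<Rightarrow> distr \<Rightarrow> nat set \<Rightarrow> real" where
  "phi_theta i \<theta> lam D B = (LINT z:{lep D - lam i..}|lborel. rank_integrand D B lam i \<theta> z)"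

definition J_theta :: "nat \<Rightarrow> nat \<Rightarrow> (nat \<Rightarrow> real) \<Rightarrow> distr \<Rightarrow> nat set \<Rightarrow> real" where
  "J_theta i \<theta> lam D B = (LINT z:{lep D - lam i..}|lborel. rank_integrand D B lam i \<theta> z / (z + lam i))"

definition phi :: "nat \<Rightarrow> (nat \<Rightarrow> real) \<Rightarrow> distr \<Rightarrow> nat \<Rightarrow> nat set \<Rightarrow> real" where
  "phi i lam D m B = (\<Sum>\<theta>=1..m. phi_theta i \<theta> lam D B)"

definition J :: "nat \<Rightarrow> (nat \<Rightarrow> real) \<Rightarrow> distr \<Rightarrow> nat \<Rightarrow> nat set \<Rightarrow> real" where
  "J i lam D m B = (\<Sum>\<theta>=1..m. J_theta i \<theta> lam D B)"

end

theory Submission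
  imports Defs
begin

text \<open>
  Removing the competitor \<open>j\<close> splits the event "rank of \<open>i\<close> in \<open>B\<close> is at most \<open>m\<close>": either
  \<open>i\<close> already has rank at most \<open>m - 1\<close> in \<open>B - {j}\<close>, or it has rank exactly \<open>m\<close> there and beats
  \<open>j\<close>. Hence \<open>\<phi> = P + q(\<lambda>\<^sub>j)\<close> and \<open>J = A + c(\<lambda>\<^sub>j)\<close>, where \<open>P\<close>, \<open>A\<close> are the quantities for
  \<open>B - {j}\<close> and \<open>m - 1\<close>, and only \<open>q\<close>, \<open>c\<close> (the rank-\<open>m\<close> integrals weighted by
  \<open>F(z + \<lambda>\<^sub>j)\<close>) depend on \<open>\<lambda>\<^sub>j\<close>. The weight is nondecreasing in \<open>\<lambda>\<^sub>j\<close>, so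
  \<open>q(\<lambda>\<^sub>j) \<le> q(\<lambda>'\<^sub>j)\<close>. Both CDFs are log-concave, so \<open>F(z + \<lambda>\<^sub>j) / F(z + \<lambda>'\<^sub>j)\<close> is
  nondecreasing in \<open>z\<close>, while \<open>1 / (z + \<lambda>\<^sub>i)\<close> is decreasing; a single-crossing argument
  gives \<open>c(\<lambda>\<^sub>j) / q(\<lambda>\<^sub>j) \<le> c(\<lambda>'\<^sub>j) / q(\<lambda>'\<^sub>j)\<close>. The claim is then the elementary
  mediant inequality \<open>(A + c) / (P + q) \<le> max (A / P) ((A + c') / (P + q'))\<close>.
\<close>

lemma convex_on_inner_le_outer:
  fixes G :: "real \<Rightarrow> real"
  assumes "convex_on A G" "u \<in> A" "v \<in> A" "u \<le> x" "x \<le> v" "u \<le> y" "y \<le> v" "x + y = u + v"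
  shows "G x + G y \<le> G u + G v"
proof (cases "u = v")
  case False
  define \<mu> where "\<mu> = (x - u) / (v - u)"
  have \<mu>: "0 \<le> \<mu>" "\<mu> \<le> 1" using assms False by (auto simp: \<mu>_def)
  have "\<mu> * (v - u) = x - u"
    using False by (simp add: \<mu>_def)
  then have "x = (1 - \<mu>) * u + \<mu> * v" "y = (1 - (1 - \<mu>)) * u + (1 - \<mu>) * v"
    using assms(8) by (simp_all add: algebra_simps)
  then have "G x \<le> (1 - \<mu>) * G u + \<mu> * G v" "G y \<le> (1 - (1 - \<mu>)) * G u + (1 - \<mu>) * G v"
    using convex_onD[OF assms(1), of \<mu> u v] convex_onD[OF assms(1), of "1 - \<mu>" u v] \<mu> assms(2,3)
    by auto
  then show ?thesis by (simp add: algebra_simps)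
qed (use assms in auto)

lemma tp2_single_crossing:
  fixes F :: "real \<Rightarrow> real"
  assumes "mono F" "\<And>x. 0 \<le> F x" "a \<le> b"
    and tp2: "\<And>x y. x \<le> y \<Longrightarrow> F (x + a) * F (y + b) \<le> F (y + a) * F (x + b)"
  obtains \<rho> where "\<And>z. z \<le> z0 \<Longrightarrow> F (z + a) \<le> \<rho> * F (z + b)"
    and "\<And>z. z0 \<le> z \<Longrightarrow> \<rho> * F (z + b) \<le> F (z + a)"
proof (cases "F (z0 + b) = 0")
  case True
  show ?thesis
  proof (rule that[of 0])
    fix z
    assume "z \<le> z0"
    then have "F (z + a) \<le> F (z0 + b)" using assms(1,3) by (simp add: monoD)
    then show "F (z + a) \<le> 0 * F (z + b)" using True by simp
  qed (use assms(2) in simp)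
next
  case False
  then have pos: "0 < F (z0 + b)" using assms(2) by (simp add: less_le)
  show ?thesis
  proof (rule that[of "F (z0 + a) / F (z0 + b)"])
    fix z
    assume "z \<le> z0"
    then show "F (z + a) \<le> F (z0 + a) / F (z0 + b) * F (z + b)"
      using tp2[of z z0] pos by (simp add: field_simps)
  next
    fix z
    assume "z0 \<le> z"
    then show "F (z0 + a) / F (z0 + b) * F (z + b) \<le> F (z + a)"
      using tp2[of z0 z] pos by (simp add: field_simps)
  qed
qed

lemma inverse_single_crossing:
  fixes F :: "real \<Rightarrow> real"
  assumes "mono F" "\<And>x. 0 \<le> F x" "a \<le> b"
    and "\<And>x y. x \<le> y \<Longrightarrow> F (x + a) * F (y + b) \<le> F (y + a) * F (x + b)"
  shows "\<exists>\<rho>. \<forall>z. 0 < z + c \<longrightarrow> 0 \<le> (t - 1 / (z + c)) * (F (z + a) - \<rho> * F (z + b))"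
proof (cases "t \<le> 0")
  case True
  have "0 \<le> (t - 1 / (z + c)) * (F (z + a) - 1 * F (z + b))" if "0 < z + c" for z
  proof (rule mult_nonpos_nonpos)
    have "0 < 1 / (z + c)" using that by simp
    then show "t - 1 / (z + c) \<le> 0" using True by linarith
    show "F (z + a) - 1 * F (z + b) \<le> 0" using monoD[OF assms(1), of "z + a" "z + b"] assms(3) by simp
  qed
  then show ?thesis by blast
next
  case False
  obtain \<rho> where below: "\<And>z. z \<le> 1 / t - c \<Longrightarrow> F (z + a) \<le> \<rho> * F (z + b)"
    and above: "\<And>z. 1 / t - c \<le> z \<Longrightarrow> \<rho> * F (z + b) \<le> F (z + a)"
    using tp2_single_crossing[OF assms] by metis
  have "0 \<le> (t - 1 / (z + c)) * (F (z + a) - \<rho> * F (z + b))" if "0 < z + c" for z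
  proof (cases "z \<le> 1 / t - c")
    case True
    then have "t \<le> 1 / (z + c)" using that False by (simp add: field_simps)
    then show ?thesis using below[OF True] by (intro mult_nonpos_nonpos) auto
  next
    case outside: False
    then have "1 / (z + c) \<le> t" using that False by (simp add: field_simps)
    then show ?thesis using above outside by (intro mult_nonneg_nonneg) auto
  qed
  then show ?thesis by blast
qed

text \<open>The side conditions for \<open>P = 0\<close> and \<open>q = 0\<close> are needed because \<open>x / 0 = 0\<close>.\<close>
lemma mediant_le_max:
  fixes P A q c q' c' :: real
  assumes "0 \<le> P" "0 \<le> A" "0 \<le> q" "0 \<le> c" "0 \<le> c'" "q \<le> q'" "c * q' \<le> c' * q"
    and "P = 0 \<Longrightarrow> A = 0" "q = 0 \<Longrightarrow> c = 0"
  shows "(A + c) / (P + q) \<le> max (A / P) ((A + c') / (P + q'))"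
proof (cases "q = 0")
  case False
  then have pos: "0 < q" "0 < q'" using assms(3,6) by auto
  define t where "t = c' / q'"
  have c: "c \<le> q * t" using assms(7) pos by (simp add: t_def field_simps)
  show ?thesis
  proof (cases "A \<le> P * t")
    case True
    have "(A + c) / (P + q) \<le> (A + q * t) / (P + q)"
      using c pos assms(1) by (simp add: divide_right_mono)
    also have "\<dots> \<le> (A + q' * t) / (P + q')"
    proof -
      have "0 \<le> (q' - q) * (P * t - A)" using True assms(6) by simp
      then show ?thesis using pos assms(1) by (simp add: field_simps)
    qed
    finally show ?thesis using pos by (simp add: t_def)
  next
    case False
    then have "0 < P" using assms(1,8) by (cases "P = 0") auto
    have "P * c \<le> P * (q * t)"
      using c \<open>0 < P\<close> by (simp add: mult_left_mono)
    also have "\<dots> = P * t * q"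
      by (simp add: mult_ac)
    also have "\<dots> \<le> A * q"
      using False pos by (simp add: mult_right_mono)
    finally have "(A + c) / (P + q) \<le> A / P"
      using pos \<open>0 < P\<close> by (simp add: field_simps)
    then show ?thesis by simp
  qed
qed (use assms in auto)

lemma cube_mult_exp_neg_le: "0 \<le> (u::real) \<Longrightarrow> u^3 * exp (- u) \<le> 27"
proof -
  assume "0 \<le> u"
  moreover have "u / 3 \<le> exp (u / 3)"
    using exp_ge_add_one_self[of "u / 3"] by linarith
  ultimately have "(u / 3)^3 \<le> exp (u / 3)^3"
    by (intro power_mono) auto
  also have "\<dots> = exp u"
    by (simp flip: exp_of_nat_mult)
  finally show ?thesis
    by (simp add: exp_minus field_simps power_divide)
qed

section \<open>Set integrals\<close>

lemma set_integral_nonneg: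
  fixes f :: "'a \<Rightarrow> real"
  shows "(\<And>x. x \<in> A \<Longrightarrow> 0 \<le> f x) \<Longrightarrow> 0 \<le> (LINT x:A|M. f x)"
  unfolding set_lebesgue_integral_def
  by (rule integral_nonneg_AE) (auto split: split_indicator intro!: AE_I2)

lemma set_integral_mult_eq_0:
  fixes f g :: "'a \<Rightarrow> real"
  assumes "set_integrable M A f" "\<And>x. x \<in> A \<Longrightarrow> 0 \<le> f x" "(LINT x:A|M. f x) = 0"
  shows "(LINT x:A|M. f x * g x) = 0"
proof -
  have "AE x in M. indicator A x * f x = 0"
    using assms by (subst integral_nonneg_eq_0_iff_AE[symmetric])
      (auto simp: set_integrable_def set_lebesgue_integral_def split: split_indicator intro!: AE_I2)
  then have "AE x in M. indicator A x * (f x * g x) = 0"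
    by eventually_elim auto
  then show ?thesis
    unfolding set_lebesgue_integral_def by (simp add: integral_eq_zero_AE)
qed

lemma set_integral_sum:
  fixes f :: "'i \<Rightarrow> 'a \<Rightarrow> real"
  assumes "\<And>s. s \<in> I \<Longrightarrow> set_integrable M A (f s)"
  shows "set_integrable M A (\<lambda>x. \<Sum>s\<in>I. f s x)"
    and "(LINT x:A|M. (\<Sum>s\<in>I. f s x)) = (\<Sum>s\<in>I. LINT x:A|M. f s x)"
  using assms Bochner_Integration.integral_sum[where I = I and M = M and f = "\<lambda>s x. indicator A x * f s x"]
  by (simp_all add: set_integrable_def set_lebesgue_integral_def sum_distrib_left)

lemma set_integrable_bounded_mult:
  fixes f h :: "'a \<Rightarrow> real"
  assumes "integrable M f" "h \<in> borel_measurable M" "\<And>z. \<bar>h z\<bar> \<le> K" "A \<in> sets M"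
  shows "set_integrable M A (\<lambda>z. h z * f z)"
proof -
  have "integrable M (\<lambda>z. h z * f z)"
  proof (rule Bochner_Integration.integrable_bound)
    show "integrable M (\<lambda>z. K * f z)" using assms(1) by simp
    show "AE z in M. norm (h z * f z) \<le> norm (K * f z)"
      using assms(3) by (intro AE_I2) (auto simp: abs_mult intro!: mult_right_mono order_trans[OF assms(3) abs_ge_self])
  qed (use assms in measurable)
  then show ?thesis
    unfolding set_integrable_def using assms(4) by (rule integrable_mult_indicator[rotated])
qed

text \<open>Cross-multiplied form of: the mean of \<open>g\<close> with respect to the weight \<open>fa * w\<close> is at most
  its mean with respect to \<open>fb * w\<close>.\<close>
lemma set_integral_mean_le_single_crossing:
  fixes fa fb g w :: "'a \<Rightarrow> real"
  assumes "set_integrable M A (\<lambda>z. fa z * w z)" "set_integrable M A (\<lambda>z. fa z * w z * g z)"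
    and "set_integrable M A (\<lambda>z. fb z * w z)" "set_integrable M A (\<lambda>z. fb z * w z * g z)"
    and "\<And>z. z \<in> A \<Longrightarrow> 0 \<le> fa z" "\<And>z. z \<in> A \<Longrightarrow> 0 \<le> fb z"
    and "\<And>z. z \<in> A \<Longrightarrow> 0 \<le> g z" "\<And>z. z \<in> A \<Longrightarrow> 0 \<le> w z"
    and crossing: "\<And>t. \<exists>\<rho>. \<forall>z\<in>A. 0 \<le> (t - g z) * (fa z - \<rho> * fb z) * w z"
  shows "(LINT z:A|M. fa z * w z * g z) * (LINT z:A|M. fb z * w z)
       \<le> (LINT z:A|M. fb z * w z * g z) * (LINT z:A|M. fa z * w z)"
proof -
  define qa ca qb cb where "qa = (LINT z:A|M. fa z * w z)" and "ca = (LINT z:A|M. fa z * w z * g z)"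
    and "qb = (LINT z:A|M. fb z * w z)" and "cb = (LINT z:A|M. fb z * w z * g z)"
  have nonneg: "0 \<le> qa" "0 \<le> qb" "0 \<le> cb"
    unfolding qa_def qb_def cb_def using assms(5-8) by (auto intro!: set_integral_nonneg)
  show ?thesis
  proof (cases "qb = 0")
    case False
    define t where "t = cb / qb"
    obtain \<rho> where \<rho>: "\<forall>z\<in>A. 0 \<le> (t - g z) * (fa z - \<rho> * fb z) * w z"
      using crossing by blast
    have "(LINT z:A|M. (t * (fa z * w z) - fa z * w z * g z) - \<rho> * (t * (fb z * w z) - fb z * w z * g z))
        = (t * qa - ca) - \<rho> * (t * qb - cb)"
      using assms(1-4) by (simp add: qa_def ca_def qb_def cb_def)
    also have "t * qb - cb = 0"
      using False by (simp add: t_def)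
    finally have "(LINT z:A|M. (t - g z) * (fa z - \<rho> * fb z) * w z) = t * qa - ca"
      by (simp add: algebra_simps)
    moreover have "0 \<le> (LINT z:A|M. (t - g z) * (fa z - \<rho> * fb z) * w z)"
      using \<rho> by (intro set_integral_nonneg) auto
    ultimately have "ca \<le> t * qa" by simp
    then show ?thesis
      using nonneg False by (simp add: qa_def ca_def qb_def cb_def t_def field_simps)
  qed (use nonneg in \<open>simp add: qa_def qb_def cb_def\<close>)
qed

lemma set_integrable_inverse_square: "set_integrable lborel {1..} (\<lambda>x::real. 1 / x^2)"
proof -
  have "(\<lambda>x::real. 1 / x^2) absolutely_integrable_on {1..}"
    using has_integral_inverse_power_to_inf[of 2 1]
    by (intro nonnegative_absolutely_integrable_1) (auto simp: integrable_on_def)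
  then show ?thesis
    unfolding set_integrable_def by (subst (asm) integrable_completion) auto
qed

lemma integrable_bounded_inverse_square_tail:
  fixes f :: "real \<Rightarrow> real"
  assumes [measurable]: "f \<in> borel_measurable borel"
    and "\<And>x. x \<le> 0 \<Longrightarrow> f x = 0"
    and "\<And>x. 0 < x \<Longrightarrow> x \<le> 1 \<Longrightarrow> \<bar>f x\<bar> \<le> C"
    and "\<And>x. 1 \<le> x \<Longrightarrow> \<bar>f x\<bar> \<le> C / x^2"
  shows "integrable lborel f"
proof (rule Bochner_Integration.integrable_bound)
  have "integrable lborel (\<lambda>x::real. C * indicator {0..1} x)"
    by (intro integrable_mult_right integrable_real_indicator) auto
  moreover have "integrable lborel (\<lambda>x::real. indicator {1..} x * (C * (1 / x^2)))"
    using set_integrable_mult_right[of C lborel "{1..}", OF set_integrable_inverse_square]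
    by (simp add: set_integrable_def)
  ultimately show "integrable lborel (\<lambda>x. C * indicator {0..1} x + indicator {1..} x * (C * (1 / x^2)))"
    by simp
  have "0 \<le> C" using assms(3)[of 1] by simp
  have "\<bar>f x\<bar> \<le> C * indicator {0..1} x + indicator {1..} x * (C * (1 / x^2))" for x
  proof -
    consider "x \<le> 0" | "0 < x" "x \<le> 1" | "1 < x" by linarith
    then show ?thesis
    proof cases
      case 1
      then show ?thesis using assms(2) \<open>0 \<le> C\<close> by (simp add: indicator_def)
    next
      case 2
      then show ?thesis using assms(3)[OF 2] \<open>0 \<le> C\<close> by (auto simp: indicator_def)
    next
      case 3
      then show ?thesis using assms(4)[of x] by (simp add: indicator_def)
    qed
  qed
  then show "AE x in lborel. norm (f x) \<le> norm (C * indicator {0..1} x + indicator {1..} x * (C * (1 / x^2)))"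
    by (intro AE_I2) (simp add: order_trans[OF _ abs_ge_self])
qed simp

section \<open>Poisson binomial probabilities\<close>

definition poisson_binomial :: "'a set \<Rightarrow> ('a \<Rightarrow> real) \<Rightarrow> nat \<Rightarrow> real" where
  "poisson_binomial X q s = (\<Sum>S | S \<subseteq> X \<and> card S = s. (\<Prod>k\<in>S. q k) * (\<Prod>k\<in>X - S. 1 - q k))"

lemma poisson_binomial_empty: "poisson_binomial {} q s = (if s = 0 then 1 else 0)"
proof -
  have subsets: "{S. S \<subseteq> {} \<and> card S = s} = (if s = 0 then {{}} else {})" by auto
  show ?thesis unfolding poisson_binomial_def subsets by simp
qed

lemma subsets_card_insert_Suc:
  assumes "finite X" "j \<notin> X"
  shows "{S. S \<subseteq> insert j X \<and> card S = Suc s}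
       = {S. S \<subseteq> X \<and> card S = Suc s} \<union> insert j ` {S. S \<subseteq> X \<and> card S = s}"
proof (intro equalityI subsetI)
  fix S
  assume S: "S \<in> {S. S \<subseteq> insert j X \<and> card S = Suc s}"
  show "S \<in> {S. S \<subseteq> X \<and> card S = Suc s} \<union> insert j ` {S. S \<subseteq> X \<and> card S = s}"
  proof (cases "j \<in> S")
    case True
    then have "S = insert j (S - {j})" "card (S - {j}) = s"
      using S by (auto simp: card_Diff_singleton)
    then show ?thesis using S by blast
  qed (use S in auto)
qed (use assms finite_subset in \<open>auto simp: card_insert_if\<close>)

lemma poisson_binomial_insert:
  assumes "finite X" "j \<notin> X"
  shows "poisson_binomial (insert j X) q 0 = (1 - q j) * poisson_binomial X q 0"
    and "poisson_binomial (insert j X) q (Suc s)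
       = (1 - q j) * poisson_binomial X q (Suc s) + q j * poisson_binomial X q s"
proof -
  have subsets_0: "{S. S \<subseteq> Y \<and> card S = 0} = {{}}" if "finite Y" for Y :: "'a set"
    using that finite_subset by fastforce
  show "poisson_binomial (insert j X) q 0 = (1 - q j) * poisson_binomial X q 0"
    using assms by (simp add: poisson_binomial_def subsets_0 prod.insert_remove)
  let ?term = "\<lambda>Y S. (\<Prod>k\<in>S. q k) * (\<Prod>k\<in>Y - S. 1 - q k)"
  have without_j: "?term (insert j X) S = (1 - q j) * ?term X S" if "S \<subseteq> X" for S
  proof -
    have "insert j X - S = insert j (X - S)" using that assms(2) by auto
    then show ?thesis using assms by simp
  qed
  have with_j: "?term (insert j X) (insert j S) = q j * ?term X S" if "S \<subseteq> X" for S
  proof -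
    have "insert j X - insert j S = X - S" using that assms(2) by auto
    moreover have "j \<notin> S" "finite S" using that assms finite_subset by auto
    ultimately show ?thesis by simp
  qed
  have finite: "finite {S. S \<subseteq> X \<and> card S = k}" for k
    using assms(1) by simp
  have "{S. S \<subseteq> X \<and> card S = Suc s} \<inter> insert j ` {S. S \<subseteq> X \<and> card S = s} = {}"
    and "inj_on (insert j) {S. S \<subseteq> X \<and> card S = s}"
    using assms(2) by (auto simp: inj_on_def)
  then have "poisson_binomial (insert j X) q (Suc s)
      = (\<Sum>S | S \<subseteq> X \<and> card S = Suc s. ?term (insert j X) S)
        + (\<Sum>S | S \<subseteq> X \<and> card S = s. ?term (insert j X) (insert j S))"
    unfolding poisson_binomial_def subsets_card_insert_Suc[OF assms]
    by (simp add: sum.union_disjoint finite sum.reindex)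
  also have "\<dots> = (1 - q j) * poisson_binomial X q (Suc s) + q j * poisson_binomial X q s"
    unfolding poisson_binomial_def sum_distrib_left
    by (intro arg_cong2[where f = "(+)"] sum.cong refl; rule without_j with_j) auto
  finally show "poisson_binomial (insert j X) q (Suc s)
       = (1 - q j) * poisson_binomial X q (Suc s) + q j * poisson_binomial X q s" .
qed

lemma sum_poisson_binomial_insert:
  assumes "finite X" "j \<notin> X"
  shows "(\<Sum>s<Suc n. poisson_binomial (insert j X) q s)
       = (\<Sum>s<n. poisson_binomial X q s) + (1 - q j) * poisson_binomial X q n"
  by (induction n) (simp_all add: poisson_binomial_insert[OF assms] algebra_simps)

lemma poisson_binomial_bounds:
  assumes "finite X" "\<And>k. k \<in> X \<Longrightarrow> 0 \<le> q k \<and> q k \<le> 1"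
  shows "0 \<le> poisson_binomial X q s" "poisson_binomial X q s \<le> 1"
proof -
  have "\<forall>s. 0 \<le> poisson_binomial X q s \<and> poisson_binomial X q s \<le> 1"
    using assms
  proof (induction X rule: finite_induct)
    case (insert j X)
    have q: "0 \<le> q j" "q j \<le> 1" using insert.prems by auto
    show ?case
    proof
      fix s
      show "0 \<le> poisson_binomial (insert j X) q s \<and> poisson_binomial (insert j X) q s \<le> 1"
        using insert q by (cases s) (auto simp: poisson_binomial_insert convex_bound_le mult_le_one)
    qed
  qed (simp add: poisson_binomial_empty)
  then show "0 \<le> poisson_binomial X q s" "poisson_binomial X q s \<le> 1" by auto
qed

section \<open>The Frechet and Pareto distributions\<close>

lemma cdf_measurable [measurable]: "(\<lambda>x. cdf D x) \<in> borel_measurable borel"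
  by (cases D) (simp_all, measurable)

lemma pdf_measurable [measurable]: "(\<lambda>x. pdf D x) \<in> borel_measurable borel"
  by (cases D) (simp_all, measurable)

lemma lep_nonneg: "0 \<le> lep D"
  by (cases D) auto

lemma cdf_nonneg: "D \<in> {Frechet a, Pareto a} \<Longrightarrow> 0 < a \<Longrightarrow> 0 \<le> cdf D x"
  using powr_mono[of "-a" 0 x] by auto

lemma cdf_le_1: "D \<in> {Frechet a, Pareto a} \<Longrightarrow> cdf D x \<le> 1"
  by auto

lemma pdf_nonneg: "D \<in> {Frechet a, Pareto a} \<Longrightarrow> 0 \<le> a \<Longrightarrow> 0 \<le> pdf D x"
  by auto

lemma pdf_eq_0: "D \<in> {Frechet a, Pareto a} \<Longrightarrow> x \<le> 0 \<Longrightarrow> pdf D x = 0"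
  by auto

lemma cdf_mono:
  assumes "D \<in> {Frechet a, Pareto a}" "0 < a"
  shows "mono (cdf D)"
proof
  fix x y :: real
  assume "x \<le> y"
  show "cdf D x \<le> cdf D y"
  proof (cases "lep D \<le> x")
    case True
    then have "0 \<le> x" using lep_nonneg order_trans by blast
    then show ?thesis
      using assms True \<open>x \<le> y\<close> powr_mono2[of a x y] powr_mono2'[of "-a" x y] by (auto simp: frac_le)
  next
    case False
    then show ?thesis using assms cdf_nonneg[OF assms] by auto
  qed
qed

fun neg_log_cdf :: "distr \<Rightarrow> real \<Rightarrow> real" where
  "neg_log_cdf (Frechet a) x = x powr -a"
| "neg_log_cdf (Pareto a) x = - ln (1 - x powr -a)"

lemma cdf_eq_exp_neg_log_cdf:
  assumes "D \<in> {Frechet a, Pareto a}" "0 < a"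
  shows "cdf D x = (if lep D < x then exp (- neg_log_cdf D x) else 0)"
  using assms powr_less_one[of x "-a"] by (auto simp: powr_minus_divide)

lemma convex_neg_log_cdf:
  assumes "D \<in> {Frechet a, Pareto a}" "0 < a"
  shows "convex_on {lep D<..} (neg_log_cdf D)"
proof -
  have "convex_on {0<..} (\<lambda>x::real. x powr -a)"
  proof (rule convex_on_realI[where f' = "\<lambda>x. -a * x powr (-a - 1)"])
    show "((\<lambda>x. x powr -a) has_real_derivative -a * x powr (-a - 1)) (at x)" if "x \<in> {0<..}" for x
      using that by (auto intro!: derivative_eq_intros)
    show "-a * x powr (-a - 1) \<le> -a * y powr (-a - 1)" if "x \<in> {0<..}" "y \<in> {0<..}" "x \<le> y" for x y
      using that assms powr_mono2'[of "-a - 1" x y] by auto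
  qed auto
  moreover have "convex_on {1<..} (\<lambda>x::real. - ln (1 - x powr -a))"
  proof (rule convex_on_realI[where f' = "\<lambda>x. - (a * x powr (-a - 1) / (1 - x powr -a))"])
    show "((\<lambda>x. - ln (1 - x powr -a)) has_real_derivative - (a * x powr (-a - 1) / (1 - x powr -a))) (at x)"
      if "x \<in> {1<..}" for x
      using that assms powr_less_one[of x "-a"] by (auto intro!: derivative_eq_intros simp: field_simps)
    show "- (a * x powr (-a - 1) / (1 - x powr -a)) \<le> - (a * y powr (-a - 1) / (1 - y powr -a))"
      if "x \<in> {1<..}" "y \<in> {1<..}" "x \<le> y" for x y
    proof -
      have "y powr (-a - 1) / (1 - y powr -a) \<le> x powr (-a - 1) / (1 - x powr -a)"
        using that assms powr_mono2'[of "-a - 1" x y] powr_mono2'[of "-a" x y] powr_less_one[of x "-a"]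
        by (intro frac_le) auto
      from mult_left_mono[OF this, of a] show ?thesis using assms by simp
    qed
  qed auto
  ultimately show ?thesis using assms by (auto simp: neg_log_cdf.simps[abs_def])
qed

lemma cdf_tp2:
  assumes D: "D \<in> {Frechet a, Pareto a}" "0 < a" and "x \<le> y" "s \<le> t"
  shows "cdf D (x + s) * cdf D (y + t) \<le> cdf D (y + s) * cdf D (x + t)"
proof (cases "lep D < x + s")
  case True
  let ?G = "neg_log_cdf D"
  have "?G (y + s) + ?G (x + t) \<le> ?G (x + s) + ?G (y + t)"
    using True assms by (intro convex_on_inner_le_outer[OF convex_neg_log_cdf[OF D]]) auto
  then show ?thesis
    using True assms by (simp add: cdf_eq_exp_neg_log_cdf[OF D] flip: exp_add)
next
  case False
  then show ?thesis
    using cdf_nonneg[OF D] by (simp add: cdf_eq_exp_neg_log_cdf[OF D])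
qed

lemma pdf_div_le:
  assumes "D \<in> {Frechet a, Pareto a}" "1 \<le> a" "0 < x" "x \<le> 1"
  shows "pdf D x / x \<le> 27 * a"
proof (cases "D = Frechet a")
  case True
  define u where "u = x powr -a"
  have "x powr -(a + 1) = x powr (-(a + 2) + 1)"
    by (simp add: algebra_simps)
  also have "\<dots> = x powr -(a + 2) * x"
    using assms by (simp only: powr_add) simp
  finally have "x powr -(a + 1) / x = x powr -(a + 2)"
    using assms by simp
  also have "\<dots> \<le> x powr -(3 * a)"
    using assms by (intro powr_mono') auto
  also have "\<dots> = u^3"
    using assms by (simp add: u_def powr_powr powr_realpow [symmetric] mult.commute)
  finally have bound: "x powr -(a + 1) / x \<le> u^3" .
  have "pdf D x / x = a * (x powr -(a + 1) / x) * exp (- u)"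
    using True assms by (simp add: u_def powr_minus_divide)
  also have "\<dots> \<le> a * u^3 * exp (- u)"
    using bound assms by (intro mult_right_mono mult_left_mono) auto
  also have "\<dots> \<le> a * 27"
    using assms cube_mult_exp_neg_le[of u] by (simp add: u_def mult_left_mono mult.assoc)
  finally show ?thesis by simp
qed (use assms in auto)

lemma pdf_le_inverse_square:
  assumes "D \<in> {Frechet a, Pareto a}" "1 \<le> a" "1 \<le> x"
  shows "pdf D x \<le> a / x^2"
proof -
  have "pdf D x \<le> a * x powr -(a + 1)"
    using assms by (auto intro: mult_left_le)
  also have "\<dots> \<le> a * x powr -2"
    using assms by (intro mult_left_mono powr_mono) auto
  finally show ?thesis
    using assms by (simp add: powr_minus_divide powr_realpow)
qed

lemma integrable_pdf_shift:
  assumes "D \<in> {Frechet a, Pareto a}" "1 \<le> a"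
  shows "integrable lborel (\<lambda>z. pdf D (z + c))" "integrable lborel (\<lambda>z. pdf D (z + c) / (z + c))"
proof -
  have nonneg: "0 \<le> pdf D x" "0 \<le> pdf D x / x" if "0 < x" for x
    using pdf_nonneg[OF assms(1)] assms(2) that by auto
  have "integrable lborel (pdf D)"
  proof (rule integrable_bounded_inverse_square_tail[where C = "27 * a"])
    show "\<bar>pdf D x\<bar> \<le> 27 * a" if "0 < x" "x \<le> 1" for x
    proof -
      have "27 * a * x \<le> 27 * a" using that assms(2) by (simp add: mult_left_le)
      then show ?thesis using pdf_div_le[OF assms that] nonneg[OF that(1)] that
        by (simp add: divide_le_eq)
    qed
    show "\<bar>pdf D x\<bar> \<le> 27 * a / x^2" if "1 \<le> x" for x
      using pdf_le_inverse_square[OF assms that] nonneg[of x] assms(2) that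
      by (simp add: divide_right_mono)
  qed (use assms in auto)
  moreover have "integrable lborel (\<lambda>x. pdf D x / x)"
  proof (rule integrable_bounded_inverse_square_tail[where C = "27 * a"])
    show "\<bar>pdf D x / x\<bar> \<le> 27 * a" if "0 < x" "x \<le> 1" for x
      using pdf_div_le[OF assms that] nonneg[OF that(1)] by simp
    show "\<bar>pdf D x / x\<bar> \<le> 27 * a / x^2" if "1 \<le> x" for x
    proof -
      have "pdf D x / x \<le> pdf D x / 1"
        using nonneg[of x] that by (intro divide_left_mono) auto
      moreover have "a / x^2 \<le> 27 * a / x^2"
        using assms(2) by (simp add: divide_right_mono)
      ultimately show ?thesis
        using pdf_le_inverse_square[OF assms that] nonneg[of x] that by simp
    qed
  qed (use assms in auto)
  ultimately show "integrable lborel (\<lambda>z. pdf D (z + c))" "integrable lborel (\<lambda>z. pdf D (z + c) / (z + c))"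
    using lborel_integrable_real_affine[of _ 1 c] by (simp_all add: add.commute)
qed

section \<open>Rank integrals\<close>

lemma rank_integrand_eq_poisson_binomial:
  "rank_integrand D B lam i \<theta> z
     = poisson_binomial (B - {i}) (\<lambda>k. 1 - cdf D (z + lam k)) (\<theta> - 1) * pdf D (z + lam i)"
  unfolding rank_integrand_def poisson_binomial_def
  by (intro arg_cong2[where f = "(*)"] sum.cong prod.cong refl) auto

lemma rank_integrand_cong:
  assumes "i \<in> B" "\<And>k. k \<in> B \<Longrightarrow> lam k = lam' k"
  shows "rank_integrand D B lam i \<theta> = rank_integrand D B lam' i \<theta>"
  unfolding rank_integrand_def using assms
  by (intro ext arg_cong2[where f = "(*)"] sum.cong prod.cong) auto

lemma rank_integrand_bounds:
  assumes "D \<in> {Frechet a, Pareto a}" "0 < a" "finite B"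
  shows "0 \<le> rank_integrand D B lam i \<theta> z" "rank_integrand D B lam i \<theta> z \<le> pdf D (z + lam i)"
proof -
  let ?p = "poisson_binomial (B - {i}) (\<lambda>k. 1 - cdf D (z + lam k)) (\<theta> - 1)"
  have "0 \<le> ?p" "?p \<le> 1"
    using assms cdf_nonneg[OF assms(1,2)] cdf_le_1[OF assms(1)] by (auto intro!: poisson_binomial_bounds)
  moreover have "0 \<le> pdf D (z + lam i)"
    using pdf_nonneg[OF assms(1)] assms(2) by simp
  ultimately show "0 \<le> rank_integrand D B lam i \<theta> z" "rank_integrand D B lam i \<theta> z \<le> pdf D (z + lam i)"
    unfolding rank_integrand_eq_poisson_binomial by (simp_all add: mult_left_le_one_le)
qed

lemma set_integrable_rank_integrand:
  assumes "D \<in> {Frechet a, Pareto a}" "1 \<le> a" "finite B"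
    and [measurable]: "h \<in> borel_measurable borel"
    and "\<And>z. \<bar>h z\<bar> \<le> K" "A \<in> sets lborel"
  shows "set_integrable lborel A (\<lambda>z. h z * rank_integrand D B lam i \<theta> z)"
    and "set_integrable lborel A (\<lambda>z. h z * rank_integrand D B lam i \<theta> z / (z + lam i))"
proof -
  define p where "p z = poisson_binomial (B - {i}) (\<lambda>k. 1 - cdf D (z + lam k)) (\<theta> - 1)" for z
  have [measurable]: "p \<in> borel_measurable borel"
    unfolding p_def[abs_def] poisson_binomial_def by measurable
  have "\<bar>p z\<bar> \<le> 1" for z
    unfolding p_def using assms cdf_nonneg[OF assms(1)] cdf_le_1[OF assms(1)]
    by (subst abs_of_nonneg) (auto intro!: poisson_binomial_bounds)
  then have bounded: "\<bar>h z * p z\<bar> \<le> K" for z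
    using assms(5)[of z] mult_right_le_one_le[of "\<bar>h z\<bar>" "\<bar>p z\<bar>"] by (simp add: abs_mult)
  have mult: "set_integrable lborel A (\<lambda>z. h z * p z * f z)" if "integrable lborel f" for f
    by (rule set_integrable_bounded_mult[OF that _ bounded assms(6)]) measurable
  show "set_integrable lborel A (\<lambda>z. h z * rank_integrand D B lam i \<theta> z)"
    using mult[OF integrable_pdf_shift(1)[OF assms(1,2), of "lam i"]]
    by (simp add: rank_integrand_eq_poisson_binomial p_def mult.assoc)
  show "set_integrable lborel A (\<lambda>z. h z * rank_integrand D B lam i \<theta> z / (z + lam i))"
    using mult[OF integrable_pdf_shift(2)[OF assms(1,2), of "lam i"]]
    by (simp add: rank_integrand_eq_poisson_binomial p_def mult.assoc)
qed

lemma sum_rank_integrand_remove: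
  assumes "finite B" "i \<in> B" "j \<in> B" "j \<noteq> i"
  shows "(\<Sum>\<theta>=1..Suc n. rank_integrand D B lam i \<theta> z)
       = (\<Sum>\<theta>=1..n. rank_integrand D (B - {j}) lam i \<theta> z)
         + cdf D (z + lam j) * rank_integrand D (B - {j}) lam i (Suc n) z"
proof -
  have sum_eq: "(\<Sum>\<theta>=1..k. rank_integrand D X lam i \<theta> z)
      = (\<Sum>s<k. poisson_binomial (X - {i}) (\<lambda>k. 1 - cdf D (z + lam k)) s) * pdf D (z + lam i)"
    for X k
    by (induction k) (simp_all add: rank_integrand_eq_poisson_binomial algebra_simps)
  have B: "B - {i} = insert j (B - {j} - {i})" "finite (B - {j} - {i})" "j \<notin> B - {j} - {i}"
    using assms by auto
  have "(\<Sum>s<Suc n. poisson_binomial (B - {i}) (\<lambda>k. 1 - cdf D (z + lam k)) s)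
      = (\<Sum>s<n. poisson_binomial (B - {j} - {i}) (\<lambda>k. 1 - cdf D (z + lam k)) s)
        + cdf D (z + lam j) * poisson_binomial (B - {j} - {i}) (\<lambda>k. 1 - cdf D (z + lam k)) n"
    using sum_poisson_binomial_insert[OF B(2,3), where n = n] by (simp add: B(1))
  then show ?thesis
    unfolding sum_eq by (simp add: rank_integrand_eq_poisson_binomial algebra_simps)
qed

text \<open>The integrals of \<open>phi_theta\<close> and \<open>J_theta\<close> with the extra factor \<open>cdf D (z + t)\<close>: the
  probability that \<open>i\<close> has rank \<open>\<theta>\<close> and also beats a further competitor shifted by \<open>t\<close>.\<close>
definition phi_theta_cdf :: "nat \<Rightarrow> nat \<Rightarrow> (nat \<Rightarrow> real) \<Rightarrow> distr \<Rightarrow> nat set \<Rightarrow> real \<Rightarrow> real" where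
  "phi_theta_cdf i \<theta> lam D B t
     = (LINT z:{lep D - lam i..}|lborel. cdf D (z + t) * rank_integrand D B lam i \<theta> z)"

definition J_theta_cdf :: "nat \<Rightarrow> nat \<Rightarrow> (nat \<Rightarrow> real) \<Rightarrow> distr \<Rightarrow> nat set \<Rightarrow> real \<Rightarrow> real" where
  "J_theta_cdf i \<theta> lam D B t
     = (LINT z:{lep D - lam i..}|lborel. cdf D (z + t) * rank_integrand D B lam i \<theta> z / (z + lam i))"

lemma phi_J_cong:
  assumes "i \<in> B" "\<And>k. k \<in> B \<Longrightarrow> lam k = lam' k"
  shows "phi i lam D m B = phi i lam' D m B" "J i lam D m B = J i lam' D m B"
    and "phi_theta_cdf i \<theta> lam D B t = phi_theta_cdf i \<theta> lam' D B t"
    and "J_theta_cdf i \<theta> lam D B t = J_theta_cdf i \<theta> lam' D B t"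
  using rank_integrand_cong[OF assms] assms
  by (simp_all add: phi_def J_def phi_theta_def J_theta_def phi_theta_cdf_def J_theta_cdf_def)

lemma phi_J_eq_set_integral:
  assumes "D \<in> {Frechet a, Pareto a}" "1 \<le> a" "finite B"
  shows "phi i lam D m B = (LINT z:{lep D - lam i..}|lborel. \<Sum>\<theta>=1..m. rank_integrand D B lam i \<theta> z)"
    and "J i lam D m B
       = (LINT z:{lep D - lam i..}|lborel. (\<Sum>\<theta>=1..m. rank_integrand D B lam i \<theta> z) / (z + lam i))"
proof -
  let ?U = "{lep D - lam i..}"
  have "set_integrable lborel ?U (rank_integrand D B lam i \<theta>)"
    and "set_integrable lborel ?U (\<lambda>z. rank_integrand D B lam i \<theta> z / (z + lam i))" for \<theta>
    using set_integrable_rank_integrand[OF assms, where h = "\<lambda>_. 1" and K = 1 and A = ?U] by simp_all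
  from set_integral_sum(2)[where I = "{1..m}", OF this(1)] set_integral_sum(2)[where I = "{1..m}", OF this(2)]
  show
    "phi i lam D m B = (LINT z:?U|lborel. \<Sum>\<theta>=1..m. rank_integrand D B lam i \<theta> z)"
    "J i lam D m B = (LINT z:?U|lborel. (\<Sum>\<theta>=1..m. rank_integrand D B lam i \<theta> z) / (z + lam i))"
    by (simp_all add: phi_def J_def phi_theta_def J_theta_def sum_divide_distrib)
qed

lemma phi_J_nonneg:
  assumes "D \<in> {Frechet a, Pareto a}" "1 \<le> a" "finite B"
  shows "0 \<le> phi i lam D m B" "0 \<le> J i lam D m B"
    and "0 \<le> phi_theta_cdf i \<theta> lam D B t" "0 \<le> J_theta_cdf i \<theta> lam D B t"
  using rank_integrand_bounds(1)[OF assms(1) _ assms(3)] cdf_nonneg[OF assms(1)] assms(2) lep_nonneg[of D]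
  by (auto simp: phi_J_eq_set_integral[OF assms] phi_theta_cdf_def J_theta_cdf_def
      intro!: set_integral_nonneg sum_nonneg divide_nonneg_nonneg)

lemma J_eq_0_if_phi_eq_0:
  assumes "D \<in> {Frechet a, Pareto a}" "1 \<le> a" "finite B" "phi i lam D m B = 0"
  shows "J i lam D m B = 0"
proof -
  let ?U = "{lep D - lam i..}"
  have "set_integrable lborel ?U (rank_integrand D B lam i \<theta>)" for \<theta>
    using set_integrable_rank_integrand(1)[OF assms(1-3), where h = "\<lambda>_. 1" and K = 1 and A = ?U] by simp
  from set_integral_mult_eq_0[OF set_integral_sum(1)[where I = "{1..m}", OF this], where g = "\<lambda>z. 1 / (z + lam i)"]
  show ?thesis
    using rank_integrand_bounds(1)[OF assms(1) _ assms(3)] assms(2,4)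
    by (simp add: phi_J_eq_set_integral[OF assms(1-3)] sum_nonneg)
qed

lemma set_integrable_cdf_rank_integrand:
  assumes "D \<in> {Frechet a, Pareto a}" "1 \<le> a" "finite B" "A \<in> sets lborel"
  shows "set_integrable lborel A (\<lambda>z. cdf D (z + t) * rank_integrand D B lam i \<theta> z)"
    and "set_integrable lborel A (\<lambda>z. cdf D (z + t) * rank_integrand D B lam i \<theta> z / (z + lam i))"
  using set_integrable_rank_integrand[OF assms(1-3) _ _ assms(4), where h = "\<lambda>z. cdf D (z + t)" and K = 1]
    cdf_nonneg[OF assms(1)] cdf_le_1[OF assms(1)] assms(2)
  by simp_all

lemma phi_J_Suc_remove:
  assumes "D \<in> {Frechet a, Pareto a}" "1 \<le> a" "finite B" "i \<in> B" "j \<in> B" "j \<noteq> i"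
  shows "phi i lam D (Suc n) B = phi i lam D n (B - {j}) + phi_theta_cdf i (Suc n) lam D (B - {j}) (lam j)"
    and "J i lam D (Suc n) B = J i lam D n (B - {j}) + J_theta_cdf i (Suc n) lam D (B - {j}) (lam j)"
proof -
  let ?U = "{lep D - lam i..}"
  have B': "finite (B - {j})" using assms(3) by simp
  have "set_integrable lborel ?U (rank_integrand D (B - {j}) lam i \<theta>)"
    and "set_integrable lborel ?U (\<lambda>z. rank_integrand D (B - {j}) lam i \<theta> z / (z + lam i))" for \<theta>
    using set_integrable_rank_integrand[OF assms(1,2) B', where h = "\<lambda>_. 1" and K = 1 and A = ?U]
    by simp_all
  note sums = set_integral_sum(1)[where I = "{1..n}" and f = "\<lambda>\<theta>. rank_integrand D (B - {j}) lam i \<theta>", OF this(1)]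
    set_integral_sum(1)[where I = "{1..n}" and f = "\<lambda>\<theta> z. rank_integrand D (B - {j}) lam i \<theta> z / (z + lam i)", OF this(2)]
  note cdf_terms = set_integrable_cdf_rank_integrand[OF assms(1,2) B', of ?U "lam j" lam i "Suc n"]
  show "phi i lam D (Suc n) B = phi i lam D n (B - {j}) + phi_theta_cdf i (Suc n) lam D (B - {j}) (lam j)"
    unfolding phi_J_eq_set_integral[OF assms(1-3)] phi_J_eq_set_integral[OF assms(1,2) B']
      sum_rank_integrand_remove[OF assms(3-6)] phi_theta_cdf_def
    using set_integral_add(2)[OF sums(1) cdf_terms(1)] by simp
  show "J i lam D (Suc n) B = J i lam D n (B - {j}) + J_theta_cdf i (Suc n) lam D (B - {j}) (lam j)"
    unfolding phi_J_eq_set_integral[OF assms(1-3)] phi_J_eq_set_integral[OF assms(1,2) B']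
      sum_rank_integrand_remove[OF assms(3-6)] J_theta_cdf_def
    using set_integral_add(2)[OF sums(2) cdf_terms(2)]
    by (simp add: add_divide_distrib sum_divide_distrib)
qed

lemma phi_theta_cdf_mono:
  assumes "D \<in> {Frechet a, Pareto a}" "1 \<le> a" "finite B" "x \<le> y"
  shows "phi_theta_cdf i \<theta> lam D B x \<le> phi_theta_cdf i \<theta> lam D B y"
  unfolding phi_theta_cdf_def
  using monoD[OF cdf_mono[OF assms(1)]] rank_integrand_bounds(1)[OF assms(1) _ assms(3)] assms(2,4)
  by (intro set_integral_mono set_integrable_cdf_rank_integrand[OF assms(1-3)]) (auto intro!: mult_right_mono)

lemma J_theta_cdf_eq_0_if_phi_theta_cdf_eq_0:
  assumes "D \<in> {Frechet a, Pareto a}" "1 \<le> a" "finite B" "phi_theta_cdf i \<theta> lam D B t = 0"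
  shows "J_theta_cdf i \<theta> lam D B t = 0"
  using set_integral_mult_eq_0[OF set_integrable_cdf_rank_integrand(1)[OF assms(1-3)], where g = "\<lambda>z. 1 / (z + lam i)"]
    assms(2,4) cdf_nonneg[OF assms(1)] rank_integrand_bounds(1)[OF assms(1) _ assms(3)]
  by (simp add: phi_theta_cdf_def J_theta_cdf_def)

lemma J_phi_theta_cdf_cross_le:
  assumes D: "D \<in> {Frechet a, Pareto a}" "1 \<le> a" and "finite B" "x \<le> y"
  shows "J_theta_cdf i \<theta> lam D B x * phi_theta_cdf i \<theta> lam D B y
       \<le> J_theta_cdf i \<theta> lam D B y * phi_theta_cdf i \<theta> lam D B x"
proof -
  let ?U = "{lep D - lam i..}" and ?r = "rank_integrand D B lam i \<theta>"
  have D0: "D \<in> {Frechet a, Pareto a}" "0 < a" using D by auto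
  have "\<exists>\<rho>. \<forall>z\<in>?U. 0 \<le> (t - 1 / (z + lam i)) * (cdf D (z + x) - \<rho> * cdf D (z + y)) * ?r z" for t
  proof -
    obtain \<rho> where \<rho>: "\<forall>z. 0 < z + lam i \<longrightarrow> 0 \<le> (t - 1 / (z + lam i)) * (cdf D (z + x) - \<rho> * cdf D (z + y))"
      using inverse_single_crossing[OF cdf_mono[OF D0] cdf_nonneg[OF D0] \<open>x \<le> y\<close> cdf_tp2[OF D0 _ \<open>x \<le> y\<close>]]
      by blast
    have "0 \<le> (t - 1 / (z + lam i)) * (cdf D (z + x) - \<rho> * cdf D (z + y)) * ?r z" for z
    proof (cases "0 < z + lam i")
      case True
      then show ?thesis using \<rho> rank_integrand_bounds(1)[OF D0 \<open>finite B\<close>] by simp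
    next
      case False
      then show ?thesis
        using rank_integrand_bounds[OF D0 \<open>finite B\<close>, of lam i \<theta> z] pdf_eq_0[OF D0(1)] by simp
    qed
    then show ?thesis by blast
  qed
  then show ?thesis
    using set_integral_mean_le_single_crossing[where M = lborel and A = ?U and g = "\<lambda>z. 1 / (z + lam i)"
        and fa = "\<lambda>z. cdf D (z + x)" and fb = "\<lambda>z. cdf D (z + y)" and w = ?r]
      set_integrable_cdf_rank_integrand[OF D \<open>finite B\<close>]
      cdf_nonneg[OF D0] rank_integrand_bounds(1)[OF D0 \<open>finite B\<close>] lep_nonneg[of D]
    by (simp add: phi_theta_cdf_def J_theta_cdf_def)
qed

theorem lemma12:
  fixes \<alpha> :: real and D :: distr and d :: nat and B :: "nat set" and i j m :: nat
    and lam lam' :: "nat \<Rightarrow> real"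
  assumes "\<alpha> > 1"
    and "D \<in> {Frechet \<alpha>, Pareto \<alpha>}"
    and "B \<subseteq> {1..d}" and "i \<in> B"
    and "\<forall>k\<in>{1..d}. lam k \<ge> 0"
    and "m > 1"
    and "j \<in> B - {i}"
    and "\<forall>k\<in>{1..d}. lam' k \<ge> 0"
    and "lam' j \<ge> lam j"
    and "\<forall>k\<in>{1..d}. k \<noteq> j \<longrightarrow> lam' k = lam k"
  shows "J i lam D m B / phi i lam D m B
         \<le> max (J i lam' D (m - 1) (B - {j}) / phi i lam' D (m - 1) (B - {j}))
               (J i lam' D m B / phi i lam' D m B)"
proof -
  have D: "D \<in> {Frechet \<alpha>, Pareto \<alpha>}" "1 \<le> \<alpha>" using assms(1,2) by auto
  obtain n where m: "m = Suc n" using \<open>m > 1\<close> by (cases m) auto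
  have B: "finite B" "j \<in> B" "j \<noteq> i" using assms(3,7) finite_subset by auto
  have B': "finite (B - {j})" "i \<in> B - {j}" using B assms(4) by auto
  have lam': "lam k = lam' k" if "k \<in> B - {j}" for k using that assms(3,10) by auto
  let ?P = "phi i lam D n (B - {j})" and ?A = "J i lam D n (B - {j})"
  let ?q = "phi_theta_cdf i m lam D (B - {j})" and ?c = "J_theta_cdf i m lam D (B - {j})"
  have "phi i lam D m B = ?P + ?q (lam j)" "J i lam D m B = ?A + ?c (lam j)"
    using phi_J_Suc_remove[OF D B(1) assms(4) B(2,3)] by (simp_all add: m)
  moreover have "phi i lam' D m B = ?P + ?q (lam' j)" "J i lam' D m B = ?A + ?c (lam' j)"
    using phi_J_Suc_remove[OF D B(1) assms(4) B(2,3), of lam'] phi_J_cong[OF B'(2) lam']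
    by (simp_all add: m)
  moreover have "phi i lam' D (m - 1) (B - {j}) = ?P" "J i lam' D (m - 1) (B - {j}) = ?A"
    using phi_J_cong[OF B'(2) lam'] by (simp_all add: m)
  ultimately show ?thesis
    using mediant_le_max[OF phi_J_nonneg(1,2)[OF D B'(1)] phi_J_nonneg(3,4)[OF D B'(1)]
        phi_J_nonneg(4)[OF D B'(1)] phi_theta_cdf_mono[OF D B'(1) \<open>lam j \<le> lam' j\<close>]
        J_phi_theta_cdf_cross_le[OF D B'(1) \<open>lam j \<le> lam' j\<close>]
        J_eq_0_if_phi_eq_0[OF D B'(1)] J_theta_cdf_eq_0_if_phi_theta_cdf_eq_0[OF D B'(1)]]
    by simp
qed

end
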